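(* Let $G$ be a plane graph with maximum degree $\Delta\ge 2$. Then $\pi_{fl}(G)\le \lceil \Delta + 4\sqrt{\Delta}+3\rceil$.
   Context: A plane graph is a planar graph with a fixed embedding in the plane. A facial path is a path whose vertices are consecutive vertices on the boundary walk of some face. A $2j$-repetition is a path $v_1\dots v_{2j}$ with $c(v_i)=c(v_{i+j})$ for $1\le i\le j$. A vertex-coloring is facially non-repetitive if no facial path is a repetition. $\pi_{fl}(G)$, the facial Thue choice number, is the minimum $k$ such that for every assignment of lists of size at least $k$ to the vertices, $G$ has a facially non-repetitive coloring with each vertex colored from its list. *)

theory Defs
  imports Complex_Main
begin

text \<open>A plane graph is represented combinatorially: a finite simple graph (vertex set V,
symmetric irreflexive adjacency E) together with a rotation system rot, where rot u is a
cyclic permutation of the neighbours of u (the clockwise order of the edges around u in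
the embedding). Boundary walks of faces are the orbits of the face-tracing map on darts.
The rotation system comes from an embedding in the plane iff every connected component
with at least one edge satisfies Euler's formula V - E + F = 2 (genus 0).\<close>

definition nbrs :: "('v \<Rightarrow> 'v \<Rightarrow> bool) \<Rightarrow> 'v \<Rightarrow> 'v set" where
  "nbrs E u = {w. E u w}"

definition degree :: "('v \<Rightarrow> 'v \<Rightarrow> bool) \<Rightarrow> 'v \<Rightarrow> nat" where
  "degree E u = card (nbrs E u)"

definition max_degree :: "'v set \<Rightarrow> ('v \<Rightarrow> 'v \<Rightarrow> bool) \<Rightarrow> nat" where
  "max_degree V E = Max (degree E ` V)"

definition darts :: "('v \<Rightarrow> 'v \<Rightarrow> bool) \<Rightarrow> ('v \<times> 'v) set" where
  "darts E = {(u, v). E u v}"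

definition face_succ :: "('v \<Rightarrow> 'v \<Rightarrow> 'v) \<Rightarrow> 'v \<times> 'v \<Rightarrow> 'v \<times> 'v" where
  "face_succ rot d = (snd d, rot (snd d) (fst d))"

definition face_orbit :: "('v \<Rightarrow> 'v \<Rightarrow> 'v) \<Rightarrow> 'v \<times> 'v \<Rightarrow> ('v \<times> 'v) set" where
  "face_orbit rot d = {(face_succ rot ^^ k) d | k. True}"

definition component :: "('v \<Rightarrow> 'v \<Rightarrow> bool) \<Rightarrow> 'v \<Rightarrow> 'v set" where
  "component E v = {w. E\<^sup>*\<^sup>* v w}"

definition comp_edges :: "('v \<Rightarrow> 'v \<Rightarrow> bool) \<Rightarrow> 'v set \<Rightarrow> 'v set set" where
  "comp_edges E C = {{x, y} | x y. E x y \<and> x \<in> C}"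

definition comp_faces :: "('v \<Rightarrow> 'v \<Rightarrow> bool) \<Rightarrow> ('v \<Rightarrow> 'v \<Rightarrow> 'v) \<Rightarrow> 'v set
    \<Rightarrow> ('v \<times> 'v) set set" where
  "comp_faces E rot C = {face_orbit rot d | d. d \<in> darts E \<and> fst d \<in> C}"

definition plane_graph :: "'v set \<Rightarrow> ('v \<Rightarrow> 'v \<Rightarrow> bool) \<Rightarrow> ('v \<Rightarrow> 'v \<Rightarrow> 'v) \<Rightarrow> bool" where
  "plane_graph V E rot \<longleftrightarrow>
     finite V \<and>
     (\<forall>u v. E u v \<longrightarrow> u \<in> V \<and> v \<in> V) \<and>
     (\<forall>u v. E u v \<longrightarrow> E v u) \<and>
     (\<forall>u. \<not> E u u) \<and>
     (\<forall>u\<in>V. bij_betw (rot u) (nbrs E u) (nbrs E u) \<and>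
        (\<forall>w\<in>nbrs E u. \<forall>w'\<in>nbrs E u. \<exists>k. (rot u ^^ k) w = w')) \<and>
     (\<forall>v\<in>V. nbrs E v \<noteq> {} \<longrightarrow>
        card (component E v) + card (comp_faces E rot (component E v))
          = card (comp_edges E (component E v)) + 2)"

definition facial_path :: "'v set \<Rightarrow> ('v \<Rightarrow> 'v \<Rightarrow> bool) \<Rightarrow> ('v \<Rightarrow> 'v \<Rightarrow> 'v) \<Rightarrow> 'v list \<Rightarrow> bool" where
  "facial_path V E rot vs \<longleftrightarrow>
     vs \<noteq> [] \<and> set vs \<subseteq> V \<and> distinct vs \<and>
     (\<exists>d \<in> darts E. \<forall>i. Suc i < length vs \<longrightarrow>
         (face_succ rot ^^ i) d = (vs ! i, vs ! Suc i))"

definition is_repetition :: "('v \<Rightarrow> 'c) \<Rightarrow> 'v list \<Rightarrow> bool" where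
  "is_repetition c vs \<longleftrightarrow>
     (\<exists>j\<ge>1. length vs = 2 * j \<and> (\<forall>i<j. c (vs ! i) = c (vs ! (i + j))))"

definition facially_nonrepetitive ::
    "'v set \<Rightarrow> ('v \<Rightarrow> 'v \<Rightarrow> bool) \<Rightarrow> ('v \<Rightarrow> 'v \<Rightarrow> 'v) \<Rightarrow> ('v \<Rightarrow> 'c) \<Rightarrow> bool" where
  "facially_nonrepetitive V E rot c \<longleftrightarrow>
     (\<forall>vs. facial_path V E rot vs \<longrightarrow> \<not> is_repetition c vs)"

definition facial_thue_choosable ::
    "'c itself \<Rightarrow> 'v set \<Rightarrow> ('v \<Rightarrow> 'v \<Rightarrow> bool) \<Rightarrow> ('v \<Rightarrow> 'v \<Rightarrow> 'v) \<Rightarrow> nat \<Rightarrow> bool" where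
  "facial_thue_choosable _ V E rot k \<longleftrightarrow>
     (\<forall>L :: 'v \<Rightarrow> 'c set. (\<forall>v\<in>V. infinite (L v) \<or> k \<le> card (L v)) \<longrightarrow>
        (\<exists>c. (\<forall>v\<in>V. c v \<in> L v) \<and> facially_nonrepetitive V E rot c))"

definition facial_thue_choice_number ::
    "'c itself \<Rightarrow> 'v set \<Rightarrow> ('v \<Rightarrow> 'v \<Rightarrow> bool) \<Rightarrow> ('v \<Rightarrow> 'v \<Rightarrow> 'v) \<Rightarrow> nat" where
  "facial_thue_choice_number t V E rot = (LEAST k. facial_thue_choosable t V E rot k)"

end

theory Submission
  imports Defs "HOL-Library.FuncSet"
begin

text \<open>Colour the vertices one at a time and count. Let \<open>N S\<close> be the number of colourings of
\<open>S\<close> from lists of size \<open>k\<close> with no repetitive facial path inside \<open>S\<close>. Of the \<open>k N S\<close>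
extensions to a new vertex \<open>v\<close>, a bad one either gives \<open>v\<close> the colour of a neighbour
(at most \<open>\<Delta> N S\<close> of them) or completes a repetition of length \<open>2j \<ge> 4\<close> on one of the at
most \<open>2j\<Delta>\<close> facial paths through \<open>v\<close>. Such an extension is determined by its values off the
half of the path containing \<open>v\<close>, so by induction there are at most \<open>N S / \<beta>\<^sup>j\<^sup>-\<^sup>1\<close> of
them. For \<open>\<beta> = 2\<surd>\<Delta> + 1\<close> and \<open>k \<ge> \<Delta> + 4\<surd>\<Delta> + 3\<close> the resulting series is small
enough that \<open>N (S \<union> {v}) \<ge> \<beta> N S\<close>, hence \<open>N V > 0\<close>.\<close>

lemma sum_index_times_power_closed_form:
  fixes x :: real
  shows "(1 - x)^2 * (\<Sum>j=1..M. real j * x^(j-1)) = 1 - real (M+1) * x^M + real M * x^(M+1)"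
proof (induction M)
  case (Suc M)
  have "(1 - x)^2 * (\<Sum>j=1..Suc M. real j * x^(j-1))
      = (1 - x)^2 * (\<Sum>j=1..M. real j * x^(j-1)) + (1 - x)^2 * real (Suc M) * x^M"
    by (simp add: algebra_simps)
  also have "\<dots> = 1 - real (Suc M + 1) * x^Suc M + real (Suc M) * x^(Suc M + 1)"
    using Suc by (simp add: power2_eq_square algebra_simps)
  finally show ?case .
qed simp

lemma sum_index_times_power_le:
  fixes x :: real
  assumes "0 \<le> x" "x < 1"
  shows "(\<Sum>j=2..M. real j * x^(j-1)) \<le> 1 / (1 - x)^2 - 1"
proof -
  have "real M * x^(M+1) \<le> real (M+1) * x^M"
    using assms by (intro mult_mono) (auto simp: power_le_one mult_left_le_one_le)
  then have "(\<Sum>j=1..M. real j * x^(j-1)) \<le> 1 / (1 - x)^2"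
    using sum_index_times_power_closed_form[of x M] assms by (simp add: field_simps)
  moreover have "1 \<le> 1 / (1 - x)^2"
    using assms by (simp add: power_le_one field_simps)
  ultimately show ?thesis
    by (cases "M = 0") (simp_all add: sum.atLeast_Suc_atMost numeral_2_eq_2)
qed

lemma list_size_bound:
  fixes D :: real
  assumes "D > 0"
  defines "\<beta> \<equiv> 2 * sqrt D + 1"
  shows "\<beta> + D + D * (\<Sum>j=2..M. 2 * real j * (1/\<beta>)^(j-1)) \<le> D + 4 * sqrt D + 3"
proof -
  define s where "s = sqrt D"
  have s: "s > 0" "s * s = D" using assms by (simp_all add: s_def)
  have b: "\<beta> > 1" using s by (simp add: \<beta>_def s_def)
  have "(\<Sum>j=2..M. 2 * real j * (1/\<beta>)^(j-1)) = 2 * (\<Sum>j=2..M. real j * (1/\<beta>)^(j-1))"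
    by (simp add: sum_distrib_left mult.assoc)
  also have "\<dots> \<le> 2 * (1 / (1 - 1/\<beta>)^2 - 1)"
    using sum_index_times_power_le[of "1/\<beta>" M] b by simp
  also have "1 / (1 - 1/\<beta>)^2 = \<beta>^2 / (4 * s * s)"
    using b s by (simp add: field_simps \<beta>_def s_def[symmetric] power2_eq_square)
  finally have "D * (\<Sum>j=2..M. 2 * real j * (1/\<beta>)^(j-1)) \<le> D * (2 * (\<beta>^2 / (4 * s * s) - 1))"
    using assms by (simp add: mult_left_mono)
  also have "\<dots> = (4 * s + 1) / 2"
    using s by (simp add: s(2)[symmetric] \<beta>_def s_def[symmetric] field_simps power2_eq_square)
  finally show ?thesis by (simp add: \<beta>_def s_def)
qed

lemma is_repetition_pair: "is_repetition c [a, b] \<longleftrightarrow> c a = c b"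
  by (auto simp: is_repetition_def)

lemma is_repetition_iff_halves:
  "is_repetition c vs \<longleftrightarrow> (\<exists>j\<ge>1. length vs = 2 * j \<and> map c (take j vs) = map c (drop j vs))"
proof -
  have "map c (take j vs) = map c (drop j vs) \<longleftrightarrow> (\<forall>i<j. c (vs ! i) = c (vs ! (i + j)))"
    if "length vs = 2 * j" for j
    using that by (simp add: list_eq_iff_nth_eq add.commute)
  then show ?thesis unfolding is_repetition_def by blast
qed

lemma is_repetition_cong:
  "(\<And>w. w \<in> set vs \<Longrightarrow> c' w = c w) \<Longrightarrow> is_repetition c' vs = is_repetition c vs"
proof -
  assume agree: "\<And>w. w \<in> set vs \<Longrightarrow> c' w = c w"
  have "map c' xs = map c xs" if "set xs \<subseteq> set vs" for xs
    using agree that by auto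
  then show ?thesis
    unfolding is_repetition_iff_halves by (metis set_drop_subset set_take_subset)
qed

lemma repetitions_agree_if_agree_on_half:
  assumes "is_repetition x vs" "is_repetition y vs" "length vs = 2 * j"
    and "H = take j vs \<or> H = drop j vs" "\<forall>w\<in>set H. x w = y w"
  shows "\<forall>w\<in>set vs. x w = y w"
proof -
  have halves: "map x (take j vs) = map x (drop j vs)" "map y (take j vs) = map y (drop j vs)"
    using assms(1-3) by (auto simp: is_repetition_iff_halves)
  have "map x H = map y H" using assms(5) by simp
  then have "map x vs = map y vs"
    using assms(4) halves by (metis append_take_drop_id map_append)
  then show ?thesis by simp
qed

locale rotation_system =
  fixes V :: "'v set" and E :: "'v \<Rightarrow> 'v \<Rightarrow> bool" and rot :: "'v \<Rightarrow> 'v \<Rightarrow> 'v"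
  assumes finite_V: "finite V"
    and edge_in_V: "E u w \<Longrightarrow> u \<in> V \<and> w \<in> V"
    and edge_sym: "E u w \<Longrightarrow> E w u"
    and edge_irrefl: "\<not> E u u"
    and bij_rot: "u \<in> V \<Longrightarrow> bij_betw (rot u) (nbrs E u) (nbrs E u)"

lemma plane_graph_rotation_system: "plane_graph V E rot \<Longrightarrow> rotation_system V E rot"
  by unfold_locales (simp_all add: plane_graph_def)

context rotation_system
begin

lemma finite_nbrs: "finite (nbrs E u)"
  using edge_in_V finite_V by (auto simp: nbrs_def intro: finite_subset)

lemma face_succ_in_darts: "d \<in> darts E \<Longrightarrow> face_succ rot d \<in> darts E"
proof -
  assume "d \<in> darts E"
  then obtain u w where d: "d = (u, w)" "E u w" by (auto simp: darts_def)
  then have "w \<in> V" "u \<in> nbrs E w" using edge_in_V edge_sym by (auto simp: nbrs_def)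
  then have "rot w u \<in> nbrs E w" using bij_rot bij_betw_apply by metis
  then show ?thesis using d by (simp add: face_succ_def darts_def nbrs_def)
qed

lemma inj_on_face_succ: "inj_on (face_succ rot) (darts E)"
proof (rule inj_onI)
  fix d d' assume d: "d \<in> darts E" "d' \<in> darts E" "face_succ rot d = face_succ rot d'"
  obtain u w u' where uw: "d = (u, w)" "d' = (u', w)" "E u w" "E u' w" and "rot w u = rot w u'"
    using d by (auto simp: darts_def face_succ_def)
  moreover have "w \<in> V" "u \<in> nbrs E w" "u' \<in> nbrs E w"
    using uw edge_in_V edge_sym by (auto simp: nbrs_def)
  ultimately show "d = d'" using bij_rot bij_betw_imp_inj_on inj_onD by metis
qed

lemma funpow_face_succ_in_darts: "d \<in> darts E \<Longrightarrow> (face_succ rot ^^ n) d \<in> darts E"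
  by (induction n) (auto simp: face_succ_in_darts)

lemma inj_on_funpow_face_succ: "inj_on (face_succ rot ^^ n) (darts E)"
proof (induction n)
  case (Suc n)
  have "inj_on (face_succ rot) ((face_succ rot ^^ n) ` darts E)"
    using inj_on_face_succ by (rule inj_on_subset) (auto simp: funpow_face_succ_in_darts)
  then show ?case using Suc comp_inj_on by (fastforce simp: comp_def)
qed simp

lemma facial_path_edge:
  assumes "facial_path V E rot vs" "Suc i < length vs"
  shows "E (vs ! i) (vs ! Suc i)"
proof -
  obtain d where "d \<in> darts E" "(face_succ rot ^^ i) d = (vs ! i, vs ! Suc i)"
    using assms by (auto simp: facial_path_def)
  then show ?thesis using funpow_face_succ_in_darts by (metis darts_def case_prodD mem_Collect_eq)
qed

text \<open>Face tracing is injective on darts, so the dart at any position fixes the starting dart.\<close>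
lemma facial_path_eqI:
  assumes vs: "facial_path V E rot vs" and ws: "facial_path V E rot ws"
    and len: "length vs = length ws" and i: "Suc i < length vs"
    and "vs ! i = ws ! i" "vs ! Suc i = ws ! Suc i"
  shows "vs = ws"
proof -
  obtain d where d: "d \<in> darts E"
    "\<And>i. Suc i < length vs \<Longrightarrow> (face_succ rot ^^ i) d = (vs ! i, vs ! Suc i)"
    using vs by (auto simp: facial_path_def)
  obtain d' where d': "d' \<in> darts E"
    "\<And>i. Suc i < length ws \<Longrightarrow> (face_succ rot ^^ i) d' = (ws ! i, ws ! Suc i)"
    using ws by (auto simp: facial_path_def)
  have "(face_succ rot ^^ i) d = (face_succ rot ^^ i) d'"
    using d(2)[OF i] d'(2) i len assms(5,6) by simp
  then have dd: "d = d'" using inj_on_funpow_face_succ d(1) d'(1) by (metis inj_onD)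
  show ?thesis
  proof (rule nth_equalityI)
    fix m assume m: "m < length vs"
    show "vs ! m = ws ! m"
    proof (cases "Suc m < length vs")
      case True
      then show ?thesis using d(2) d'(2) dd len by (metis fst_conv)
    next
      case False
      then have "m = Suc (m - 1)" "Suc (m - 1) < length vs" using m i by auto
      then show ?thesis using d(2) d'(2) dd len by (metis snd_conv)
    qed
  qed (fact len)
qed

definition facial_paths_through :: "'v \<Rightarrow> nat \<Rightarrow> 'v list set" where
  "facial_paths_through v n = {vs. facial_path V E rot vs \<and> length vs = n \<and> v \<in> set vs}"

lemma card_facial_paths_through_le:
  assumes j: "j \<ge> 1"
  shows "finite (facial_paths_through v (2 * j))"
    and "card (facial_paths_through v (2 * j)) \<le> 2 * j * degree E v"
proof -
  define P where "P = facial_paths_through v (2 * j)"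
  have P_iff: "vs \<in> P \<longleftrightarrow> facial_path V E rot vs \<and> length vs = 2 * j \<and> v \<in> set vs" for vs
    by (simp add: P_def facial_paths_through_def)
  show "finite (facial_paths_through v (2 * j))"
    unfolding facial_paths_through_def
    by (rule finite_subset[OF _ finite_lists_length_eq[OF finite_V, of "2 * j"]])
       (auto simp: facial_path_def)
  define pos where "pos vs = (SOME p. p < length vs \<and> vs ! p = v)" for vs :: "'v list"
  have pos: "pos vs < length vs" "vs ! pos vs = v" if "v \<in> set vs" for vs
    unfolding pos_def using someI_ex[OF iffD1[OF in_set_conv_nth that]] by blast+
  define nb where "nb p = (if Suc p < 2 * j then Suc p else p - 1)" for p
  define f where "f vs = (pos vs, vs ! nb (pos vs))" for vs
  have "f vs \<in> {..<2 * j} \<times> nbrs E v" if vs: "vs \<in> P" for vs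
  proof -
    have p: "pos vs < 2 * j" "vs ! pos vs = v"
      using pos[of vs] vs by (auto simp: P_iff)
    have "vs ! nb (pos vs) \<in> nbrs E v"
    proof (cases "Suc (pos vs) < 2 * j")
      case True
      then show ?thesis using facial_path_edge[of vs "pos vs"] vs p
        by (auto simp: f_def nb_def nbrs_def P_iff)
    next
      case False
      then have "Suc (pos vs - 1) = pos vs" using j p by arith
      then have "E (vs ! (pos vs - 1)) v" using facial_path_edge[of vs "pos vs - 1"] vs p
        by (auto simp: P_iff)
      then show ?thesis using False by (auto simp: f_def nb_def nbrs_def edge_sym)
    qed
    then show ?thesis using p by (simp add: f_def)
  qed
  then have "f ` P \<subseteq> {..<2 * j} \<times> nbrs E v" by blast
  moreover have "inj_on f P"
  proof (rule inj_onI)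
    fix vs ws assume vs: "vs \<in> P" and ws: "ws \<in> P" and eq: "f vs = f ws"
    define p where "p = pos vs"
    have p: "pos ws = p" "vs ! p = v" "ws ! p = v" "p < 2 * j" "vs ! nb p = ws ! nb p"
      using eq pos[of vs] pos[of ws] vs ws by (auto simp: f_def p_def P_iff)
    show "vs = ws"
    proof (cases "Suc p < 2 * j")
      case True
      then show ?thesis
        using facial_path_eqI[of vs ws p] vs ws p by (auto simp: P_iff nb_def)
    next
      case False
      then have "Suc (p - 1) = p" "Suc (p - 1) < 2 * j" using j p by arith+
      then show ?thesis using facial_path_eqI[of vs ws "p - 1"] vs ws p False
        by (auto simp: P_iff nb_def)
    qed
  qed
  ultimately have "card P \<le> card ({..<2 * j} \<times> nbrs E v)"
    using finite_nbrs by (intro card_inj_on_le) auto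
  then show "card (facial_paths_through v (2 * j)) \<le> 2 * j * degree E v"
    by (simp add: card_cartesian_product degree_def P_def)
qed

end

locale list_assignment = rotation_system V E rot
  for V :: "'v set" and E :: "'v \<Rightarrow> 'v \<Rightarrow> bool" and rot :: "'v \<Rightarrow> 'v \<Rightarrow> 'v" +
  fixes L :: "'v \<Rightarrow> 'c set" and k :: nat
  assumes finite_list: "v \<in> V \<Longrightarrow> finite (L v)"
    and card_list: "v \<in> V \<Longrightarrow> card (L v) = k"
begin

definition nonrep_on :: "'v set \<Rightarrow> ('v \<Rightarrow> 'c) \<Rightarrow> bool" where
  "nonrep_on S c \<longleftrightarrow> (\<forall>vs. facial_path V E rot vs \<and> set vs \<subseteq> S \<longrightarrow> \<not> is_repetition c vs)"

definition colourings :: "'v set \<Rightarrow> ('v \<Rightarrow> 'c) set" where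
  "colourings S = {c \<in> Pi\<^sub>E S L. nonrep_on S c}"

definition num_colourings :: "'v set \<Rightarrow> real" where
  "num_colourings S = real (card (colourings S))"

definition extensions :: "'v set \<Rightarrow> 'v \<Rightarrow> ('v \<Rightarrow> 'c) set" where
  "extensions S v = {x \<in> Pi\<^sub>E (insert v S) L. nonrep_on S x}"

lemma nonrep_on_mono:
  assumes "nonrep_on S c" "T \<subseteq> S" "\<And>w. w \<in> T \<Longrightarrow> c' w = c w"
  shows "nonrep_on T c'"
  unfolding nonrep_on_def
proof (intro allI impI)
  fix vs assume vs: "facial_path V E rot vs \<and> set vs \<subseteq> T"
  then have "\<not> is_repetition c vs" using assms(1,2) by (auto simp: nonrep_on_def)
  then show "\<not> is_repetition c' vs" using is_repetition_cong[of vs c' c] vs assms(3) by blast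
qed

lemma finite_colourings: "S \<subseteq> V \<Longrightarrow> finite (colourings S)"
  unfolding colourings_def using finite_list finite_V
  by (intro finite_subset[OF _ finite_PiE[of S L]]) (auto intro: finite_subset)

lemma num_colourings_empty: "num_colourings {} = 1"
proof -
  have "colourings {} = {\<lambda>_. undefined}"
    by (auto simp: colourings_def nonrep_on_def facial_path_def)
  then show ?thesis by (simp add: num_colourings_def)
qed

lemma restrict_extension_in_colourings:
  assumes "x \<in> extensions S v" "T \<subseteq> S"
  shows "restrict x T \<in> colourings T"
proof -
  have "x \<in> Pi\<^sub>E (insert v S) L" "nonrep_on S x" using assms(1) by (auto simp: extensions_def)
  then show ?thesis
    using assms(2) nonrep_on_mono[of S x T] by (auto simp: colourings_def restrict_PiE_iff)
qed

lemma extension_eq_fun_upd: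
  assumes "x \<in> extensions S v"
  shows "x = (restrict x S)(v := x v)"
proof
  fix w
  have "x \<in> Pi\<^sub>E (insert v S) L" using assms by (simp add: extensions_def)
  then show "x w = ((restrict x S)(v := x v)) w" by (cases "w \<in> insert v S") auto
qed

lemma finite_extensions: "S \<subseteq> V \<Longrightarrow> v \<in> V \<Longrightarrow> finite (extensions S v)"
  unfolding extensions_def using finite_list finite_V
  by (intro finite_subset[OF _ finite_PiE[of "insert v S" L]]) (auto intro: finite_subset)

lemma card_extensions:
  assumes "v \<in> V" "v \<notin> S"
  shows "card (extensions S v) = card (colourings S) * k"
proof -
  let ?upd = "\<lambda>(c, a). c(v := a)"
  have "extensions S v = ?upd ` (colourings S \<times> L v)"
  proof (intro equalityI subsetI)
    fix x assume x: "x \<in> extensions S v"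
    then have "restrict x S \<in> colourings S" "x v \<in> L v"
      using restrict_extension_in_colourings[of x] by (auto simp: extensions_def)
    then have "(restrict x S, x v) \<in> colourings S \<times> L v" by simp
    moreover have "x = ?upd (restrict x S, x v)" using extension_eq_fun_upd[OF x] by simp
    ultimately show "x \<in> ?upd ` (colourings S \<times> L v)" by (rule rev_image_eqI)
  next
    fix x assume "x \<in> ?upd ` (colourings S \<times> L v)"
    then obtain c a where x: "x = c(v := a)" and c: "c \<in> colourings S" and "a \<in> L v" by auto
    moreover have "nonrep_on S x"
      using c x assms(2) by (intro nonrep_on_mono[of S c S x]) (auto simp: colourings_def)
    ultimately show "x \<in> extensions S v"
      using c by (auto simp: extensions_def colourings_def PiE_fun_upd)
  qed
  moreover have "inj_on ?upd (colourings S \<times> L v)"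
  proof (rule inj_on_inverseI)
    fix p assume "p \<in> colourings S \<times> L v"
    then obtain c a where p: "p = (c, a)" and c: "c \<in> Pi\<^sub>E S L" by (auto simp: colourings_def)
    have "restrict (c(v := a)) S = restrict c S" using assms(2) by (intro restrict_ext) auto
    then show "(\<lambda>x. (restrict x S, x v)) (?upd p) = p" using p c by simp
  qed
  ultimately show ?thesis using card_list[OF assms(1)] by (simp add: card_image card_cartesian_product)
qed

text \<open>A colouring of \<open>S \<union> {v}\<close> making \<open>vs\<close> a repetition is determined by its restriction to \<open>T\<close>,
the complement of the half \<open>H\<close> of \<open>vs\<close> through \<open>v\<close>; and \<open>S - T\<close> has only \<open>j - 1\<close> elements.\<close>
lemma card_repetitive_extensions_le:
  assumes S: "S \<subseteq> V" "v \<notin> S"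
    and growth: "\<And>T. T \<subseteq> S \<Longrightarrow> \<beta> ^ card (S - T) * num_colourings T \<le> num_colourings S"
    and "\<beta> \<ge> 0"
    and vs: "vs \<in> facial_paths_through v (2 * j)" "set vs \<subseteq> insert v S"
  shows "\<beta> ^ (j - 1) * card {x \<in> extensions S v. is_repetition x vs} \<le> num_colourings S"
proof -
  let ?R = "{x \<in> extensions S v. is_repetition x vs}"
  have len: "length vs = 2 * j" and dist: "distinct vs" and "v \<in> set vs"
    using vs by (auto simp: facial_paths_through_def facial_path_def)
  have halves: "set vs = set (take j vs) \<union> set (drop j vs)"
    "set (take j vs) \<inter> set (drop j vs) = {}"
    "card (set (take j vs)) = j" "card (set (drop j vs)) = j"
    using dist len by (auto simp: set_take_disj_set_drop_if_distinct distinct_card simp flip: set_append)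
  then obtain H K where H: "v \<in> set H"
    and HK: "H = take j vs \<and> K = drop j vs \<or> H = drop j vs \<and> K = take j vs"
    using \<open>v \<in> set vs\<close> by blast
  have disj: "set H \<inter> set K = {}" and set_HK: "set vs = set H \<union> set K" and "card (set H) = j"
    using halves HK by auto
  define T where "T = insert v S - set H"
  have TS: "T \<subseteq> S" using H by (auto simp: T_def)
  have "S - T = set H - {v}" using vs(2) S(2) set_HK by (auto simp: T_def)
  then have card_ST: "card (S - T) = j - 1" using H \<open>card (set H) = j\<close> by simp
  have "inj_on (\<lambda>x. restrict x T) ?R"
  proof (rule inj_onI)
    fix x y assume x: "x \<in> ?R" and y: "y \<in> ?R" and eq: "restrict x T = restrict y T"
    then have on_T: "x w = y w" if "w \<in> T" for w using that by (metis restrict_apply')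
    have "set K \<subseteq> T" using disj set_HK vs(2) by (auto simp: T_def)
    then have on_vs: "\<forall>w\<in>set vs. x w = y w"
      using x y len HK on_T by (intro repetitions_agree_if_agree_on_half[of x vs y j K]) auto
    have "x \<in> Pi\<^sub>E (insert v S) L" "y \<in> Pi\<^sub>E (insert v S) L"
      using x y by (auto simp: extensions_def)
    then show "x = y" using on_T on_vs set_HK unfolding T_def by (metis DiffI PiE_arb UnI1 ext)
  qed
  moreover have "(\<lambda>x. restrict x T) ` ?R \<subseteq> colourings T"
    using TS restrict_extension_in_colourings by blast
  ultimately have "card ?R \<le> card (colourings T)"
    using card_inj_on_le finite_colourings TS S(1) by (metis (no_types, lifting) order_trans)
  then have "\<beta> ^ (j - 1) * card ?R \<le> \<beta> ^ (j - 1) * num_colourings T"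
    using \<open>\<beta> \<ge> 0\<close> by (simp add: num_colourings_def mult_left_mono)
  also have "\<dots> \<le> num_colourings S" using growth[OF TS] card_ST by simp
  finally show ?thesis .
qed

definition neighbour_copies :: "'v set \<Rightarrow> 'v \<Rightarrow> ('v \<Rightarrow> 'c) set" where
  "neighbour_copies S v = (\<Union>u\<in>nbrs E v. (\<lambda>c. c(v := c u)) ` colourings S)"

definition long_repetitive_extensions :: "'v set \<Rightarrow> 'v \<Rightarrow> ('v \<Rightarrow> 'c) set" where
  "long_repetitive_extensions S v = {x \<in> extensions S v. \<exists>vs. facial_path V E rot vs \<and>
     v \<in> set vs \<and> set vs \<subseteq> insert v S \<and> 4 \<le> length vs \<and> is_repetition x vs}"

lemma extensions_subset:
  assumes "v \<notin> S"
  shows "extensions S v \<subseteq>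
    colourings (insert v S) \<union> neighbour_copies S v \<union> long_repetitive_extensions S v"
proof
  fix x assume x: "x \<in> extensions S v"
  then have x_PiE: "x \<in> Pi\<^sub>E (insert v S) L" and "nonrep_on S x" by (auto simp: extensions_def)
  show "x \<in> colourings (insert v S) \<union> neighbour_copies S v \<union> long_repetitive_extensions S v"
  proof (cases "nonrep_on (insert v S) x")
    case True
    then show ?thesis using x_PiE by (simp add: colourings_def)
  next
    case False
    then obtain vs where vs: "facial_path V E rot vs" "set vs \<subseteq> insert v S" "is_repetition x vs"
      by (auto simp: nonrep_on_def)
    have "v \<in> set vs" using vs \<open>nonrep_on S x\<close> by (auto simp: nonrep_on_def)
    consider "4 \<le> length vs" | "length vs = 2"
      using vs(3) by (fastforce simp: is_repetition_def)
    then show ?thesis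
    proof cases
      case 1
      then show ?thesis using x vs \<open>v \<in> set vs\<close> by (auto simp: long_repetitive_extensions_def)
    next
      case 2
      then obtain a b where ab: "vs = [a, b]"
        by (auto simp: length_Suc_conv numeral_2_eq_2)
      then have "E a b" "x a = x b"
        using facial_path_edge[OF vs(1), of 0] vs(3) by (auto simp: is_repetition_pair)
      then obtain u where u: "u \<in> nbrs E v" "u \<in> S" "x v = x u"
        using \<open>v \<in> set vs\<close> vs(2) ab edge_sym[of a b] edge_irrefl by (auto simp: nbrs_def)
      have "x = (restrict x S)(v := restrict x S u)"
        using extension_eq_fun_upd[OF x] u by simp
      moreover have "restrict x S \<in> colourings S"
        using restrict_extension_in_colourings[OF x] by simp
      ultimately show ?thesis using u(1) unfolding neighbour_copies_def by blast
    qed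
  qed
qed

lemma card_neighbour_copies_le:
  assumes "S \<subseteq> V"
  shows "card (neighbour_copies S v) \<le> degree E v * card (colourings S)"
proof -
  have "card (neighbour_copies S v) \<le> (\<Sum>u\<in>nbrs E v. card ((\<lambda>c. c(v := c u)) ` colourings S))"
    unfolding neighbour_copies_def using finite_nbrs by (rule card_UN_le)
  also have "\<dots> \<le> (\<Sum>u\<in>nbrs E v. card (colourings S))"
    using finite_colourings[OF assms] by (intro sum_mono card_image_le)
  finally show ?thesis by (simp add: degree_def)
qed

lemma card_long_repetitive_extensions_le:
  assumes S: "S \<subseteq> V" "v \<notin> S" and "v \<in> V"
    and growth: "\<And>T. T \<subseteq> S \<Longrightarrow> \<beta> ^ card (S - T) * num_colourings T \<le> num_colourings S"
    and "\<beta> > 0"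
  shows "card (long_repetitive_extensions S v)
    \<le> num_colourings S * degree E v * (\<Sum>j=2..card V. 2 * real j * (1/\<beta>) ^ (j - 1))"
proof -
  define P where "P j = {vs \<in> facial_paths_through v (2 * j). set vs \<subseteq> insert v S}" for j
  define R where "R vs = {x \<in> extensions S v. is_repetition x vs}" for vs
  have P: "finite (P j)" "card (P j) \<le> 2 * j * degree E v" if "j \<ge> 1" for j
  proof -
    have "P j \<subseteq> facial_paths_through v (2 * j)" by (auto simp: P_def)
    then show "finite (P j)" "card (P j) \<le> 2 * j * degree E v"
      using card_facial_paths_through_le[OF that, of v] card_mono finite_subset le_trans by metis+
  qed
  have R: "real (card (R vs)) \<le> num_colourings S * (1/\<beta>) ^ (j - 1)" if "vs \<in> P j" for j vs
    using card_repetitive_extensions_le[OF S growth, of vs j] that \<open>\<beta> > 0\<close>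
    by (simp add: P_def R_def field_simps power_divide)
  have cover: "long_repetitive_extensions S v \<subseteq> (\<Union>j\<in>{2..card V}. \<Union>vs\<in>P j. R vs)"
  proof
    fix x assume "x \<in> long_repetitive_extensions S v"
    then obtain vs where x: "x \<in> extensions S v" and vs: "facial_path V E rot vs" "v \<in> set vs"
        "set vs \<subseteq> insert v S" "4 \<le> length vs" "is_repetition x vs"
      by (auto simp: long_repetitive_extensions_def)
    then obtain j where j: "length vs = 2 * j" by (auto simp: is_repetition_def)
    have "length vs \<le> card V"
      using vs(1) distinct_card[of vs] card_mono[OF finite_V, of "set vs"]
      by (auto simp: facial_path_def)
    then have "j \<in> {2..card V}" using j vs(4) by auto
    moreover have "vs \<in> P j" using vs j by (auto simp: P_def facial_paths_through_def)
    ultimately show "x \<in> (\<Union>j\<in>{2..card V}. \<Union>vs\<in>P j. R vs)" using x vs(5) R_def by blast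
  qed
  have "finite (\<Union>j\<in>{2..card V}. \<Union>vs\<in>P j. R vs)"
    by (rule finite_subset[OF _ finite_extensions[OF S(1) \<open>v \<in> V\<close>]]) (auto simp: R_def)
  then have "card (long_repetitive_extensions S v) \<le> card (\<Union>j\<in>{2..card V}. \<Union>vs\<in>P j. R vs)"
    using cover by (rule card_mono)
  also have "\<dots> \<le> (\<Sum>j=2..card V. card (\<Union>vs\<in>P j. R vs))"
    by (rule card_UN_le) simp
  also have "\<dots> \<le> (\<Sum>j=2..card V. \<Sum>vs\<in>P j. card (R vs))"
    using P(1) by (intro sum_mono card_UN_le) auto
  finally have "real (card (long_repetitive_extensions S v))
      \<le> (\<Sum>j=2..card V. \<Sum>vs\<in>P j. real (card (R vs)))"
    by (simp flip: of_nat_sum)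
  also have "\<dots> \<le> (\<Sum>j=2..card V. \<Sum>vs\<in>P j. num_colourings S * (1/\<beta>) ^ (j - 1))"
    using R by (intro sum_mono)
  also have "\<dots> \<le> (\<Sum>j=2..card V. 2 * real j * degree E v * (num_colourings S * (1/\<beta>) ^ (j - 1)))"
  proof (intro sum_mono)
    fix j :: nat assume "j \<in> {2..card V}"
    then have "card (P j) \<le> 2 * j * degree E v" using P(2)[of j] by simp
    then have "real (card (P j)) \<le> 2 * real j * degree E v" by (metis of_nat_le_iff of_nat_mult of_nat_numeral)
    then show "(\<Sum>vs\<in>P j. num_colourings S * (1/\<beta>) ^ (j - 1))
        \<le> 2 * real j * degree E v * (num_colourings S * (1/\<beta>) ^ (j - 1))"
      using \<open>\<beta> > 0\<close> by (simp add: num_colourings_def mult_right_mono)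
  qed
  finally show ?thesis by (simp add: sum_distrib_left mult_ac)
qed

lemma num_colourings_insert_ge:
  assumes S: "S \<subseteq> V" "v \<in> V" "v \<notin> S"
    and growth: "\<And>T. T \<subseteq> S \<Longrightarrow> \<beta> ^ card (S - T) * num_colourings T \<le> num_colourings S"
    and "\<beta> > 0" and "degree E v \<le> \<Delta>"
    and list_size: "\<beta> + \<Delta> + \<Delta> * (\<Sum>j=2..card V. 2 * real j * (1/\<beta>) ^ (j - 1)) \<le> k"
  shows "\<beta> * num_colourings S \<le> num_colourings (insert v S)"
proof -
  define \<Sigma> where "\<Sigma> = (\<Sum>j=2..card V. 2 * real j * (1/\<beta>) ^ (j - 1))"
  have "\<Sigma> \<ge> 0" using \<open>\<beta> > 0\<close> by (auto simp: \<Sigma>_def intro: sum_nonneg)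
  have fin: "finite (colourings (insert v S))" "finite (neighbour_copies S v)"
    "finite (long_repetitive_extensions S v)"
    using S finite_colourings finite_extensions[OF S(1,2)]
    by (auto simp: neighbour_copies_def long_repetitive_extensions_def finite_nbrs)
  have "card (extensions S v) \<le> card (colourings (insert v S) \<union> neighbour_copies S v
      \<union> long_repetitive_extensions S v)"
    using extensions_subset[OF S(3)] fin by (intro card_mono) auto
  also have "\<dots> \<le> card (colourings (insert v S)) + card (neighbour_copies S v)
      + card (long_repetitive_extensions S v)"
    by (meson card_Un_le add_right_mono order_trans)
  finally have "real (card (colourings S) * k) \<le> real (card (colourings (insert v S))
      + card (neighbour_copies S v) + card (long_repetitive_extensions S v))"
    using card_extensions[OF S(2,3)] of_nat_mono by metis
  moreover have "real (card (neighbour_copies S v)) \<le> degree E v * num_colourings S"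
    using card_neighbour_copies_le[OF S(1), of v] unfolding num_colourings_def
    by (metis of_nat_mono of_nat_mult)
  ultimately have "num_colourings S * k \<le> num_colourings (insert v S)
      + degree E v * num_colourings S + num_colourings S * degree E v * \<Sigma>"
    using card_long_repetitive_extensions_le[OF S(1,3,2) growth \<open>\<beta> > 0\<close>]
    unfolding \<Sigma>_def num_colourings_def by simp
  also have "\<dots> = num_colourings (insert v S) + num_colourings S * (1 + \<Sigma>) * degree E v"
    by (simp add: algebra_simps)
  also have "\<dots> \<le> num_colourings (insert v S) + num_colourings S * (1 + \<Sigma>) * \<Delta>"
    using \<open>degree E v \<le> \<Delta>\<close> \<open>\<Sigma> \<ge> 0\<close> by (simp add: num_colourings_def mult_left_mono)
  finally have "num_colourings S * (real k - \<Delta> - \<Delta> * \<Sigma>) \<le> num_colourings (insert v S)"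
    by (simp add: algebra_simps)
  moreover have "\<beta> * num_colourings S \<le> num_colourings S * (real k - \<Delta> - \<Delta> * \<Sigma>)"
    using list_size mult_left_mono[of \<beta> "real k - \<Delta> - \<Delta> * \<Sigma>" "num_colourings S"]
    by (simp add: \<Sigma>_def num_colourings_def mult.commute)
  ultimately show ?thesis by linarith
qed

text \<open>The induction hypothesis for \<open>S - {w}\<close> is the growth hypothesis of the single step.\<close>
lemma num_colourings_growth:
  assumes "\<beta> > 0" and deg: "\<forall>u\<in>V. degree E u \<le> \<Delta>"
    and list_size: "\<beta> + \<Delta> + \<Delta> * (\<Sum>j=2..card V. 2 * real j * (1/\<beta>) ^ (j - 1)) \<le> k"
  shows "S \<subseteq> V \<Longrightarrow> T \<subseteq> S \<Longrightarrow> \<beta> ^ card (S - T) * num_colourings T \<le> num_colourings S"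
proof (induction "card S" arbitrary: S T rule: less_induct)
  case less
  show ?case
  proof (cases "T = S")
    case False
    then obtain w where w: "w \<in> S" "w \<notin> T" using less.prems(2) by blast
    define S' where "S' = S - {w}"
    have fin: "finite S" using less.prems(1) finite_V finite_subset by blast
    then have "card S' < card S" unfolding S'_def using w(1) by (rule card_Diff1_less)
    then have growth': "\<beta> ^ card (S' - T') * num_colourings T' \<le> num_colourings S'"
      if "T' \<subseteq> S'" for T'
      using less.hyps less.prems(1) that by (auto simp: S'_def)
    have "S - T = insert w (S' - T)" "w \<notin> S' - T" using w by (auto simp: S'_def)
    then have "card (S - T) = Suc (card (S' - T))" using fin by (simp add: S'_def)
    then have "\<beta> ^ card (S - T) * num_colourings T = \<beta> * (\<beta> ^ card (S' - T) * num_colourings T)"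
      by simp
    also have "\<dots> \<le> \<beta> * num_colourings S'"
      using growth' less.prems(2) w \<open>\<beta> > 0\<close> by (auto simp: S'_def intro: mult_left_mono)
    also have "\<dots> \<le> num_colourings (insert w S')"
      using less.prems(1) w deg \<open>\<beta> > 0\<close> list_size
      by (intro num_colourings_insert_ge growth') (auto simp: S'_def)
    finally show ?thesis using w by (simp add: S'_def insert_absorb)
  qed simp
qed

lemma colouring_exists:
  assumes "\<beta> > 0" and "\<forall>u\<in>V. degree E u \<le> \<Delta>"
    and "\<beta> + \<Delta> + \<Delta> * (\<Sum>j=2..card V. 2 * real j * (1/\<beta>) ^ (j - 1)) \<le> k"
  shows "\<exists>c. (\<forall>v\<in>V. c v \<in> L v) \<and> facially_nonrepetitive V E rot c"
proof -
  have "0 < \<beta> ^ card V * num_colourings {}"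
    using \<open>\<beta> > 0\<close> by (simp add: num_colourings_empty)
  also have "\<dots> \<le> num_colourings V"
    using num_colourings_growth[OF assms, of V "{}"] by simp
  finally obtain c where "c \<in> colourings V" by (auto simp: num_colourings_def card_gt_0_iff)
  then have "c \<in> Pi\<^sub>E V L" "nonrep_on V c" by (auto simp: colourings_def)
  then show ?thesis
    unfolding nonrep_on_def facially_nonrepetitive_def facial_path_def by blast
qed

end

lemma (in rotation_system) facial_thue_choosable_if_list_size:
  assumes "\<beta> > 0" and "\<forall>u\<in>V. degree E u \<le> \<Delta>"
    and "\<beta> + \<Delta> + \<Delta> * (\<Sum>j=2..card V. 2 * real j * (1/\<beta>) ^ (j - 1)) \<le> k"
  shows "facial_thue_choosable TYPE('c) V E rot k"
  unfolding facial_thue_choosable_def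
proof (intro allI impI)
  fix L :: "'v \<Rightarrow> 'c set"
  assume "\<forall>v\<in>V. infinite (L v) \<or> k \<le> card (L v)"
  then have "\<forall>v\<in>V. \<exists>B. B \<subseteq> L v \<and> finite B \<and> card B = k"
    by (metis infinite_arbitrarily_large obtain_subset_with_card_n)
  then obtain L' where L': "\<And>v. v \<in> V \<Longrightarrow> L' v \<subseteq> L v \<and> finite (L' v) \<and> card (L' v) = k"
    by metis
  interpret list_assignment V E rot L' k
    using L' by unfold_locales auto
  show "\<exists>c. (\<forall>v\<in>V. c v \<in> L v) \<and> facially_nonrepetitive V E rot c"
    using colouring_exists[OF assms] L' by blast
qed

theorem theorem7:
  fixes V :: "'v set" and E :: "'v \<Rightarrow> 'v \<Rightarrow> bool" and rot :: "'v \<Rightarrow> 'v \<Rightarrow> 'v"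
  assumes "plane_graph V E rot"
    and "max_degree V E \<ge> 2"
  shows "facial_thue_choice_number TYPE('c) V E rot
           \<le> nat \<lceil>real (max_degree V E) + 4 * sqrt (real (max_degree V E)) + 3\<rceil>"
proof -
  interpret rotation_system V E rot
    using assms(1) by (rule plane_graph_rotation_system)
  define \<Delta> where "\<Delta> = max_degree V E"
  define k where "k = nat \<lceil>real \<Delta> + 4 * sqrt (real \<Delta>) + 3\<rceil>"
  have "\<forall>u\<in>V. degree E u \<le> \<Delta>"
    unfolding \<Delta>_def max_degree_def using finite_V by auto
  moreover have "2 * sqrt \<Delta> + 1 + \<Delta>
      + \<Delta> * (\<Sum>j=2..card V. 2 * real j * (1 / (2 * sqrt \<Delta> + 1)) ^ (j - 1)) \<le> k"
    using list_size_bound[of \<Delta> "card V"] assms(2) unfolding k_def \<Delta>_def by linarith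
  ultimately have "facial_thue_choosable TYPE('c) V E rot k"
    by (intro facial_thue_choosable_if_list_size) (auto simp: add_nonneg_pos)
  then show ?thesis
    unfolding facial_thue_choice_number_def k_def \<Delta>_def by (rule Least_le)
qed

end
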